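(* Let $S=\{213,231,312,321\}$, let $t_n$ be the number of rooted labeled trees on $[n]$ avoiding $S$ (with $t_0=0$), and let $T(x)=\sum_{n\ge0}\frac{t_n}{n!}x^n$. Then $T$ satisfies the differential equation $T'=T+e^{T}$ with initial condition $T(0)=0$.
   Context: A rooted labeled tree on $[n]$ is an unordered tree on $n$ vertices with a distinguished root and distinct labels from $[n]$. An instance of a pattern (permutation) $\pi$ of $[k]$ is a sequence of vertices $v_1,\dots,v_k$ with $v_i$ a strict ancestor of $v_{i+1}$ whose labels are in the same relative order as $\pi$; a tree avoids $S$ if it contains no instance of any pattern in $S$. *)

theory Defs
  imports "HOL-Computational_Algebra.Formal_Power_Series"
begin

text \<open>A rooted labeled tree on the vertex set {1..n} is encoded by its parent
function p: p v is the parent of v, p r = 0 for the root r, and p v = 0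
for every v outside {1..n}. Label 0 is never a vertex.\<close>

definition is_rooted_tree :: "nat \<Rightarrow> (nat \<Rightarrow> nat) \<Rightarrow> bool" where
  "is_rooted_tree n p \<longleftrightarrow>
     (\<forall>v. v \<notin> {1..n} \<longrightarrow> p v = 0) \<and>
     (\<forall>v\<in>{1..n}. p v \<in> {0..n}) \<and>
     (\<exists>!r. r \<in> {1..n} \<and> p r = 0) \<and>
     (\<forall>v\<in>{1..n}. \<exists>k. (p ^^ k) v = 0)"

definition strict_ancestor :: "(nat \<Rightarrow> nat) \<Rightarrow> nat \<Rightarrow> nat \<Rightarrow> bool" where
  "strict_ancestor p u v \<longleftrightarrow> u \<noteq> 0 \<and> (\<exists>k\<ge>1. (p ^^ k) v = u)"

text \<open>An instance of pattern \<pi> (a permutation of [k], given as the list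
  [\<pi>(1),...,\<pi>(k)]) is a list of vertices vs = [v_1,...,v_k], v_i a strict
  ancestor of v_(i+1), whose labels are order-isomorphic to \<pi>.\<close>
definition is_instance :: "nat \<Rightarrow> (nat \<Rightarrow> nat) \<Rightarrow> nat list \<Rightarrow> nat list \<Rightarrow> bool" where
  "is_instance n p \<pi> vs \<longleftrightarrow>
     length vs = length \<pi> \<and> set vs \<subseteq> {1..n} \<and>
     (\<forall>i. Suc i < length vs \<longrightarrow> strict_ancestor p (vs ! i) (vs ! Suc i)) \<and>
     (\<forall>i<length vs. \<forall>j<length vs. vs ! i < vs ! j \<longleftrightarrow> \<pi> ! i < \<pi> ! j)"

definition avoids :: "nat \<Rightarrow> (nat \<Rightarrow> nat) \<Rightarrow> nat list set \<Rightarrow> bool" where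
  "avoids n p S \<longleftrightarrow> (\<forall>\<pi>\<in>S. \<not> (\<exists>vs. is_instance n p \<pi> vs))"

definition pattern_set :: "nat list set" where
  "pattern_set = {[2,1,3], [2,3,1], [3,1,2], [3,2,1]}"

definition t_count :: "nat \<Rightarrow> nat" where
  "t_count n = card {p. is_rooted_tree n p \<and> avoids n p pattern_set}"

definition T_egf :: "real fps" where
  "T_egf = Abs_fps (\<lambda>n. of_nat (t_count n) / fact n)"

end

theory Submission
  imports Defs
begin

(*
  A chain of three vertices, each a strict ancestor of the next, avoids the patterns
  213, 231, 312, 321 exactly when its top label is the least of the three. Let m be the least
  label of such a tree. If m is the root, deleting it leaves an avoiding forest on the other
  labels, and every such forest arises this way. Otherwise m cannot lie below the top of a
  chain of three, so m is a leaf whose parent is the root, and deleting it leaves an avoiding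
  tree. Hence t(n+1) = f(n) + t(n), where f counts avoiding forests. Splitting an avoiding
  forest into the tree containing a fixed vertex and the remaining forest gives
  f(n+1) = sum_k C(n,k) t(k+1) f(n-k). Both recursions hold for any finite set of labels, so
  by induction the counts depend only on the number of labels. For the exponential generating
  functions this says T' = T + F and F' = T' F with F(0) = 1, hence F = exp T.
*)

section \<open>Forests as parent functions\<close>

definition is_forest :: "nat set \<Rightarrow> (nat \<Rightarrow> nat) \<Rightarrow> bool" where
  "is_forest A p \<longleftrightarrow> 0 \<notin> A \<and> (\<forall>v. v \<notin> A \<longrightarrow> p v = 0) \<and> (\<forall>v\<in>A. p v \<in> insert 0 A)
     \<and> (\<forall>v\<in>A. \<exists>k. (p ^^ k) v = 0)"

definition is_tree :: "nat set \<Rightarrow> (nat \<Rightarrow> nat) \<Rightarrow> bool" where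
  "is_tree A p \<longleftrightarrow> is_forest A p \<and> (\<exists>!r. r \<in> A \<and> p r = 0)"

lemma is_forestI:
  assumes "0 \<notin> A" "\<And>v. v \<notin> A \<Longrightarrow> p v = 0" "\<And>v. v \<in> A \<Longrightarrow> p v \<in> insert 0 A"
    "\<And>v. v \<in> A \<Longrightarrow> \<exists>k. (p ^^ k) v = 0"
  shows "is_forest A p"
  unfolding is_forest_def using assms by blast

lemma
  assumes "is_forest A p"
  shows is_forest_zero_notin: "0 \<notin> A"
    and is_forest_outside: "v \<notin> A \<Longrightarrow> p v = 0"
    and is_forest_parent: "v \<in> A \<Longrightarrow> p v \<in> insert 0 A"
    and is_forest_reaches_zero: "v \<in> A \<Longrightarrow> \<exists>k. (p ^^ k) v = 0"
    and is_forest_zero: "p 0 = 0"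
  using assms unfolding is_forest_def by auto

lemma is_forest_nonzero: "is_forest A p \<Longrightarrow> v \<in> A \<Longrightarrow> v \<noteq> 0"
  unfolding is_forest_def by (intro notI) simp

lemma is_forest_parent_neq:
  assumes "is_forest A p" "m \<notin> A" "m \<noteq> 0"
  shows "p v \<noteq> m"
  using assms is_forest_parent[OF assms(1), of v] is_forest_outside[OF assms(1), of v]
  by (cases "v \<in> A") auto

lemma is_treeI:
  "is_forest A p \<Longrightarrow> r \<in> A \<Longrightarrow> p r = 0 \<Longrightarrow> (\<And>r'. r' \<in> A \<Longrightarrow> p r' = 0 \<Longrightarrow> r' = r) \<Longrightarrow> is_tree A p"
  unfolding is_tree_def by blast

lemma is_tree_forest: "is_tree A p \<Longrightarrow> is_forest A p"
  unfolding is_tree_def by simp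

lemma is_tree_root_unique:
  "is_tree A p \<Longrightarrow> r \<in> A \<Longrightarrow> p r = 0 \<Longrightarrow> r' \<in> A \<Longrightarrow> p r' = 0 \<Longrightarrow> r = r'"
  unfolding is_tree_def by blast

lemma funpow_fixpoint: "f x = x \<Longrightarrow> (f ^^ n) x = x"
  by (induction n) auto

lemma funpow_in_invariant:
  assumes "\<And>w. w \<in> S \<Longrightarrow> f w \<in> S" "x \<in> S"
  shows "(f ^^ k) x \<in> S"
  by (induction k) (use assms in auto)

lemma funpow_eq_on_invariant:
  assumes "\<And>w. w \<in> S \<Longrightarrow> f w = g w" "\<And>w. w \<in> S \<Longrightarrow> f w \<in> S" "x \<in> S"
  shows "(f ^^ k) x = (g ^^ k) x"
proof (induction k)
  case (Suc k)
  have "(f ^^ k) x \<in> S"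
    using funpow_in_invariant[of S f x k] assms(2,3) by blast
  then show ?case
    using assms(1) Suc.IH by simp
qed simp

lemma is_forest_funpow_in:
  assumes "is_forest A p" "v \<in> insert 0 A"
  shows "(p ^^ k) v \<in> insert 0 A"
  by (rule funpow_in_invariant[OF _ assms(2)])
    (use is_forest_zero[OF assms(1)] is_forest_parent[OF assms(1)] in auto)

lemma strict_ancestor_iff: "strict_ancestor p u v \<longleftrightarrow> u \<noteq> 0 \<and> (\<exists>k. (p ^^ k) (p v) = u)"
proof -
  have "(\<exists>k\<ge>1. (p ^^ k) v = u) \<longleftrightarrow> (\<exists>k. (p ^^ Suc k) v = u)"
    by (metis Suc_le_D Suc_le_mono le0 One_nat_def)
  then show ?thesis
    unfolding strict_ancestor_def by (simp add: funpow_swap1)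
qed

lemma strict_ancestor_parent: "p v \<noteq> 0 \<Longrightarrow> strict_ancestor p (p v) v"
  unfolding strict_ancestor_iff by (metis funpow_0)

lemma strict_ancestor_of_root: "p r = 0 \<Longrightarrow> p 0 = 0 \<Longrightarrow> \<not> strict_ancestor p u r"
  unfolding strict_ancestor_iff by (auto simp: funpow_fixpoint)

lemma strict_ancestor_cases:
  "strict_ancestor p u v \<Longrightarrow> u = p v \<or> strict_ancestor p u (p v)"
  unfolding strict_ancestor_iff
  by (metis funpow_0 funpow_swap1 not0_implies_Suc funpow_simps_right(2) o_apply)

lemma strict_ancestor_trans:
  assumes "strict_ancestor p a b" "strict_ancestor p b c"
  shows "strict_ancestor p a c"
proof -
  obtain i j where "i \<ge> 1" "(p ^^ i) b = a" "a \<noteq> 0" "(p ^^ j) c = b"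
    using assms unfolding strict_ancestor_def by blast
  then have "(p ^^ (i + j)) c = a" "i + j \<ge> 1" by (auto simp: funpow_add)
  then show ?thesis using \<open>a \<noteq> 0\<close> unfolding strict_ancestor_def by blast
qed

lemma strict_ancestor_in:
  assumes "is_forest A p" "strict_ancestor p u v"
  shows "u \<in> A" "v \<in> A"
proof -
  show v: "v \<in> A"
  proof (rule ccontr)
    assume "v \<notin> A"
    then show False
      using assms strict_ancestor_of_root is_forest_outside is_forest_zero by metis
  qed
  obtain k where "(p ^^ k) v = u" "u \<noteq> 0"
    using assms(2) unfolding strict_ancestor_def by blast
  then show "u \<in> A" using is_forest_funpow_in[OF assms(1), of v k] v by simp
qed

lemma strict_ancestor_irrefl:
  assumes "is_forest A p"
  shows "\<not> strict_ancestor p v v"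
proof
  assume cyc: "strict_ancestor p v v"
  then obtain k where k: "k \<ge> 1" "(p ^^ k) v = v" "v \<noteq> 0"
    unfolding strict_ancestor_def by blast
  obtain m where m: "(p ^^ m) v = 0"
    using is_forest_reaches_zero[OF assms strict_ancestor_in(2)[OF assms cyc]] by blast
  have "(p ^^ (k * m)) v = v"
    using funpow_fixpoint[of "p ^^ k" v m] k(2) by (simp add: funpow_mult)
  moreover have "(p ^^ (k * m)) v = (p ^^ (k * m - m)) ((p ^^ m) v)"
    using k(1) by (metis funpow_add le_add_diff_inverse2 mult_le_mono1 mult_1 o_apply)
  ultimately show False
    using m k(3) funpow_fixpoint[of p 0] is_forest_zero[OF assms] by simp
qed

section \<open>Pattern avoidance as a condition on chains\<close>

definition top_minimal :: "(nat \<Rightarrow> nat) \<Rightarrow> bool" where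
  "top_minimal p \<longleftrightarrow>
     (\<forall>a b c. strict_ancestor p a b \<longrightarrow> strict_ancestor p b c \<longrightarrow> a < b \<and> a < c)"

lemma top_minimalI:
  "(\<And>a b c. strict_ancestor p a b \<Longrightarrow> strict_ancestor p b c \<Longrightarrow> a < b \<and> a < c) \<Longrightarrow> top_minimal p"
  unfolding top_minimal_def by blast

lemma top_minimalD:
  "top_minimal p \<Longrightarrow> strict_ancestor p a b \<Longrightarrow> strict_ancestor p b c \<Longrightarrow> a < b \<and> a < c"
  unfolding top_minimal_def by blast

definition avoiding_trees :: "nat set \<Rightarrow> (nat \<Rightarrow> nat) set" where
  "avoiding_trees A = {p. is_tree A p \<and> top_minimal p}"

definition avoiding_forests :: "nat set \<Rightarrow> (nat \<Rightarrow> nat) set" where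
  "avoiding_forests A = {p. is_forest A p \<and> top_minimal p}"

lemma finite_forests: "finite A \<Longrightarrow> finite {p. is_forest A p}"
  by (rule finite_subset[OF _ finite_set_of_finite_funs[of A "insert 0 A" 0]])
    (auto simp: is_forest_def)

lemma finite_avoiding_forests: "finite A \<Longrightarrow> finite (avoiding_forests A)"
  unfolding avoiding_forests_def by (rule finite_subset[OF _ finite_forests]) auto

lemma finite_avoiding_trees: "finite A \<Longrightarrow> finite (avoiding_trees A)"
  unfolding avoiding_trees_def is_tree_def by (rule finite_subset[OF _ finite_forests]) auto

lemma is_instance_3:
  "is_instance n p [x, y, z] [a, b, c] \<longleftrightarrow>
     {a, b, c} \<subseteq> {1..n} \<and> strict_ancestor p a b \<and> strict_ancestor p b c \<and>
     (a < b \<longleftrightarrow> x < y) \<and> (a < c \<longleftrightarrow> x < z) \<and> (b < a \<longleftrightarrow> y < x) \<and>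
     (b < c \<longleftrightarrow> y < z) \<and> (c < a \<longleftrightarrow> z < x) \<and> (c < b \<longleftrightarrow> z < y)"
  unfolding is_instance_def by (auto simp: less_Suc_eq all_conj_distrib)

lemma avoids_pattern_set_iff_top_minimal:
  assumes "is_forest {1..n} p"
  shows "avoids n p pattern_set \<longleftrightarrow> top_minimal p"
proof
  assume avoid: "avoids n p pattern_set"
  show "top_minimal p"
  proof (rule top_minimalI)
    fix a b c assume ab: "strict_ancestor p a b" and bc: "strict_ancestor p b c"
    have ac: "strict_ancestor p a c" using strict_ancestor_trans[OF ab bc] .
    have "a \<noteq> b" "b \<noteq> c" "a \<noteq> c"
      using strict_ancestor_irrefl[OF assms] ab bc ac by auto
    moreover have "{a, b, c} \<subseteq> {1..n}"
      using strict_ancestor_in[OF assms] ab bc by auto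
    moreover have "\<not> is_instance n p [2, 1, 3] [a, b, c]" "\<not> is_instance n p [2, 3, 1] [a, b, c]"
      "\<not> is_instance n p [3, 1, 2] [a, b, c]" "\<not> is_instance n p [3, 2, 1] [a, b, c]"
      using avoid unfolding avoids_def pattern_set_def by blast+
    ultimately show "a < b \<and> a < c"
      using ab bc unfolding is_instance_3 by simp linarith
  qed
next
  assume top: "top_minimal p"
  show "avoids n p pattern_set"
    unfolding avoids_def
  proof (intro ballI notI)
    fix \<pi> assume \<pi>: "\<pi> \<in> pattern_set" and "\<exists>vs. is_instance n p \<pi> vs"
    then obtain vs where inst: "is_instance n p \<pi> vs" by blast
    obtain x y z where xyz: "\<pi> = [x, y, z]" "y < x \<or> z < x"
      using \<pi> unfolding pattern_set_def by auto
    then have "length vs = 3"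
      using inst unfolding is_instance_def by simp
    then obtain a b c where "vs = [a, b, c]"
      by (metis length_0_conv length_Suc_conv numeral_3_eq_3)
    then have "is_instance n p [x, y, z] [a, b, c]"
      using inst xyz(1) by simp
    then have "strict_ancestor p a b" "strict_ancestor p b c" "a < b \<longleftrightarrow> x < y" "a < c \<longleftrightarrow> x < z"
      unfolding is_instance_3 by auto
    then show False
      using xyz(2) top_minimalD[OF top] by auto
  qed
qed

lemma is_rooted_tree_iff: "is_rooted_tree n p \<longleftrightarrow> is_tree {1..n} p"
proof -
  have "insert 0 {1..n} = {0..n}" "0 \<notin> {1..n}" by auto
  then show ?thesis
    unfolding is_rooted_tree_def is_tree_def is_forest_def
    by (simp add: conj_commute conj_left_commute)
qed

lemma t_count_eq_card_avoiding_trees: "t_count n = card (avoiding_trees {1..n})"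
proof -
  have "{p. is_rooted_tree n p \<and> avoids n p pattern_set} = avoiding_trees {1..n}"
    unfolding avoiding_trees_def is_rooted_tree_iff
    using avoids_pattern_set_iff_top_minimal[OF is_tree_forest] by blast
  then show ?thesis unfolding t_count_def by simp
qed

section \<open>Removing the least label\<close>

definition delete_root :: "nat \<Rightarrow> (nat \<Rightarrow> nat) \<Rightarrow> nat \<Rightarrow> nat" where
  "delete_root m p = (\<lambda>v. if p v = m then 0 else p v)"

definition add_root :: "nat set \<Rightarrow> nat \<Rightarrow> (nat \<Rightarrow> nat) \<Rightarrow> nat \<Rightarrow> nat" where
  "add_root A m q = (\<lambda>v. if v \<in> A \<and> q v = 0 then m else q v)"

lemma funpow_delete_root:
  assumes "p 0 = 0" "p m = 0" "v \<noteq> m"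
  shows "(delete_root m p ^^ k) v = (if (p ^^ k) v = m then 0 else (p ^^ k) v)"
proof (induction k)
  case 0
  then show ?case using assms(3) by simp
next
  case (Suc k)
  show ?case
  proof (cases "(p ^^ k) v = m")
    case True
    then show ?thesis
      using Suc assms(1,2) by (simp add: delete_root_def)
  next
    case False
    then show ?thesis
      using Suc by (simp add: delete_root_def)
  qed
qed

lemma strict_ancestor_delete_root:
  assumes "p 0 = 0" "p m = 0"
  shows "strict_ancestor (delete_root m p) u v \<longleftrightarrow> strict_ancestor p u v \<and> u \<noteq> m"
proof (cases "v = m")
  case True
  have "delete_root m p m = 0" "delete_root m p 0 = 0"
    using assms by (simp_all add: delete_root_def)
  then show ?thesis
    using True strict_ancestor_of_root assms by metis
next
  case False
  show ?thesis
    unfolding strict_ancestor_def funpow_delete_root[OF assms False] by auto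
qed

lemma is_forest_delete_root:
  assumes f: "is_forest A p" and m: "p m = 0"
  shows "is_forest (A - {m}) (delete_root m p)"
proof (rule is_forestI)
  show "0 \<notin> A - {m}" using is_forest_zero_notin[OF f] by simp
next
  fix v assume "v \<notin> A - {m}"
  then show "delete_root m p v = 0"
    using is_forest_outside[OF f] m by (cases "v = m") (auto simp: delete_root_def)
next
  fix v assume "v \<in> A - {m}"
  then show "delete_root m p v \<in> insert 0 (A - {m})"
    using is_forest_parent[OF f] by (auto simp: delete_root_def)
next
  fix v assume v: "v \<in> A - {m}"
  then obtain k where "(p ^^ k) v = 0"
    using is_forest_reaches_zero[OF f] by blast
  then have "(delete_root m p ^^ k) v = 0"
    using funpow_delete_root[OF is_forest_zero[OF f] m] v by simp
  then show "\<exists>k. (delete_root m p ^^ k) v = 0" ..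
qed

lemma top_minimal_delete_root:
  assumes "p 0 = 0" "p m = 0" "top_minimal p"
  shows "top_minimal (delete_root m p)"
  using assms(3) unfolding top_minimal_def strict_ancestor_delete_root[OF assms(1,2)] by blast

lemma add_root_simps:
  assumes "is_forest A q" "m \<notin> A" "m \<noteq> 0"
  shows "add_root A m q m = 0" "add_root A m q 0 = 0" "delete_root m (add_root A m q) = q"
proof -
  show "delete_root m (add_root A m q) = q"
    using is_forest_parent_neq[OF assms] by (auto simp: add_root_def delete_root_def)
  show "add_root A m q m = 0" "add_root A m q 0 = 0"
    using assms is_forest_zero_notin[OF assms(1)] is_forest_outside[OF assms(1)]
    by (auto simp: add_root_def)
qed

lemma is_tree_add_root:
  assumes f: "is_forest A q" and m: "m \<notin> A" "m \<noteq> 0"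
  shows "is_tree (insert m A) (add_root A m q)"
proof -
  note simps = add_root_simps[OF f m]
  have "is_forest (insert m A) (add_root A m q)"
  proof (rule is_forestI)
    show "0 \<notin> insert m A" using m is_forest_zero_notin[OF f] by simp
  next
    fix v assume "v \<notin> insert m A"
    then show "add_root A m q v = 0"
      using is_forest_outside[OF f] by (simp add: add_root_def)
  next
    fix v assume "v \<in> insert m A"
    then show "add_root A m q v \<in> insert 0 (insert m A)"
      using simps(1) is_forest_parent[OF f, of v] by (auto simp: add_root_def)
  next
    fix v assume v: "v \<in> insert m A"
    show "\<exists>k. (add_root A m q ^^ k) v = 0"
    proof (cases "v = m")
      case True
      then have "(add_root A m q ^^ 1) v = 0" using simps(1) by simp
      then show ?thesis ..
    next
      case False
      obtain k where "(q ^^ k) v = 0"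
        using is_forest_reaches_zero[OF f] v False by blast
      then have "(add_root A m q ^^ k) v \<in> {0, m}"
        using funpow_delete_root[OF simps(2,1) False, of k] simps(3) by (auto split: if_splits)
      then have "(add_root A m q ^^ Suc k) v = 0"
        using simps(1,2) by auto
      then show ?thesis ..
    qed
  qed
  moreover have "v = m" if "v \<in> insert m A" "add_root A m q v = 0" for v
    using that m(2) by (auto simp: add_root_def split: if_splits)
  ultimately show ?thesis
    using simps(1) by (blast intro: is_treeI)
qed

lemma top_minimal_add_root:
  assumes f: "is_forest A q" and m: "m \<notin> A" "m \<noteq> 0" and least: "\<And>x. x \<in> A \<Longrightarrow> m < x"
    and top: "top_minimal q"
  shows "top_minimal (add_root A m q)"
proof (rule top_minimalI)
  note simps = add_root_simps[OF f m]
  have t: "is_forest (insert m A) (add_root A m q)"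
    using is_tree_forest[OF is_tree_add_root[OF f m]] .
  have sa: "strict_ancestor q a b \<longleftrightarrow> strict_ancestor (add_root A m q) a b \<and> a \<noteq> m" for a b
    using strict_ancestor_delete_root[OF simps(2,1), of a b] simps(3) by simp
  fix a b c
  assume ab: "strict_ancestor (add_root A m q) a b" and bc: "strict_ancestor (add_root A m q) b c"
  have "b \<noteq> m" "c \<noteq> m"
    using strict_ancestor_of_root[OF simps(1,2)] ab bc by blast+
  moreover have "b \<in> insert m A" "c \<in> insert m A"
    using strict_ancestor_in[OF t] ab bc by blast+
  ultimately show "a < b \<and> a < c"
    using least sa ab bc top_minimalD[OF top] by (cases "a = m") auto
qed

lemma add_root_delete_root:
  assumes t: "is_tree A p" and m: "m \<in> A" "p m = 0"
  shows "add_root (A - {m}) m (delete_root m p) = p"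
proof
  fix v
  have "p v \<noteq> 0" if "v \<in> A - {m}"
    using is_tree_root_unique[OF t m, of v] that by auto
  moreover have "p v = 0" if "v \<notin> A - {m}"
    using that m(2) is_forest_outside[OF is_tree_forest[OF t], of v] by (cases "v = m") auto
  ultimately show "add_root (A - {m}) m (delete_root m p) v = p v"
    by (cases "v \<in> A - {m}") (auto simp: add_root_def delete_root_def)
qed

lemma bij_betw_delete_least_root:
  assumes "0 \<notin> A" "m \<in> A" "\<And>x. x \<in> A \<Longrightarrow> m \<le> x"
  shows "bij_betw (delete_root m) {p \<in> avoiding_trees A. p m = 0} (avoiding_forests (A - {m}))"
proof (rule bij_betw_byWitness[where f' = "add_root (A - {m}) m"])
  have "m \<noteq> 0"
    using assms(1,2) by metis
  moreover have "m < x" if "x \<in> A - {m}" for x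
    using assms(3)[of x] that by simp
  ultimately have m: "m \<notin> A - {m}" "m \<noteq> 0" "\<And>x. x \<in> A - {m} \<Longrightarrow> m < x"
    by auto
  have ins: "insert m (A - {m}) = A"
    using assms(2) by auto
  show "\<forall>p\<in>{p \<in> avoiding_trees A. p m = 0}. add_root (A - {m}) m (delete_root m p) = p"
    using add_root_delete_root assms(2) unfolding avoiding_trees_def by blast
  show "\<forall>q\<in>avoiding_forests (A - {m}). delete_root m (add_root (A - {m}) m q) = q"
    using add_root_simps(3)[OF _ m(1,2)] unfolding avoiding_forests_def by blast
  show "delete_root m ` {p \<in> avoiding_trees A. p m = 0} \<subseteq> avoiding_forests (A - {m})"
  proof (clarsimp simp: avoiding_trees_def avoiding_forests_def)
    fix p assume p: "is_tree A p" "top_minimal p" "p m = 0"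
    have f: "is_forest A p" using p(1) by (rule is_tree_forest)
    show "is_forest (A - {m}) (delete_root m p) \<and> top_minimal (delete_root m p)"
      using is_forest_delete_root[OF f p(3)] top_minimal_delete_root[OF is_forest_zero[OF f] p(3,2)]
      by simp
  qed
  show "add_root (A - {m}) m ` avoiding_forests (A - {m}) \<subseteq> {p \<in> avoiding_trees A. p m = 0}"
  proof (clarsimp simp: avoiding_trees_def avoiding_forests_def)
    fix q assume q: "is_forest (A - {m}) q" "top_minimal q"
    show "is_tree A (add_root (A - {m}) m q) \<and> top_minimal (add_root (A - {m}) m q)
        \<and> add_root (A - {m}) m q m = 0"
      using is_tree_add_root[OF q(1) m(1,2)] top_minimal_add_root[OF q(1) m q(2)]
        add_root_simps(1)[OF q(1) m(1,2)]
      unfolding ins by simp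
  qed
qed

definition tree_root :: "nat set \<Rightarrow> (nat \<Rightarrow> nat) \<Rightarrow> nat" where
  "tree_root A p = (THE r. r \<in> A \<and> p r = 0)"

lemma tree_root:
  assumes "is_tree A p"
  shows "tree_root A p \<in> A" "p (tree_root A p) = 0"
proof -
  have "\<exists>!r. r \<in> A \<and> p r = 0" using assms unfolding is_tree_def by simp
  then show "tree_root A p \<in> A" "p (tree_root A p) = 0"
    unfolding tree_root_def by (metis (mono_tags, lifting) theI')+
qed

lemma tree_root_eq: "is_tree A p \<Longrightarrow> r \<in> A \<Longrightarrow> p r = 0 \<Longrightarrow> tree_root A p = r"
  using tree_root is_tree_root_unique by metis

lemma funpow_upd_childless:
  assumes "\<And>x. p x \<noteq> m" "v \<noteq> m"
  shows "((p(m := c)) ^^ k) v = (p ^^ k) v"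
  by (rule funpow_eq_on_invariant[where S = "- {m}"]) (use assms in auto)

lemma strict_ancestor_upd_childless:
  assumes "\<And>x. p x \<noteq> m" "v \<noteq> m"
  shows "strict_ancestor (p(m := c)) u v \<longleftrightarrow> strict_ancestor p u v"
  unfolding strict_ancestor_def using funpow_upd_childless[OF assms] by simp

lemma least_label_leaf_below_root:
  assumes f: "is_forest A p" and top: "top_minimal p"
    and m: "m \<in> A" "\<And>x. x \<in> A \<Longrightarrow> m \<le> x" and pm: "p m \<noteq> 0"
  shows "p (p m) = 0" "p x \<noteq> m"
proof -
  have pm_m: "strict_ancestor p (p m) m"
    using strict_ancestor_parent[of p m, OF pm] .
  have "p m \<in> A"
    using is_forest_parent[OF f m(1)] pm by simp
  show "p x \<noteq> m"
  proof
    assume "p x = m"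
    moreover have "m \<noteq> 0"
      using m(1) is_forest_zero_notin[OF f] by metis
    ultimately have "strict_ancestor p m x"
      using strict_ancestor_parent[of p x] by simp
    then have "p m < m"
      using top_minimalD[OF top pm_m] by blast
    then show False
      using m(2)[OF \<open>p m \<in> A\<close>] by simp
  qed
  show "p (p m) = 0"
  proof (rule ccontr)
    assume "p (p m) \<noteq> 0"
    then have "strict_ancestor p (p (p m)) (p m)"
      by (rule strict_ancestor_parent)
    then show False
      using top_minimalD[OF top _ pm_m] strict_ancestor_in(1)[OF f] m(2) by fastforce
  qed
qed

lemma is_tree_delete_leaf:
  assumes t: "is_tree A p" and m: "m \<in> A" "p m \<noteq> 0" and childless: "\<And>x. p x \<noteq> m"
  shows "is_tree (A - {m}) (p(m := 0))"
proof -
  have f: "is_forest A p" using is_tree_forest[OF t] .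
  have "is_forest (A - {m}) (p(m := 0))"
  proof (rule is_forestI)
    show "0 \<notin> A - {m}" using is_forest_zero_notin[OF f] by simp
  next
    fix v assume "v \<notin> A - {m}"
    then show "(p(m := 0)) v = 0"
      using is_forest_outside[OF f] by (cases "v = m") auto
  next
    fix v assume "v \<in> A - {m}"
    then show "(p(m := 0)) v \<in> insert 0 (A - {m})"
      using is_forest_parent[OF f, of v] childless[of v] by auto
  next
    fix v assume v: "v \<in> A - {m}"
    then obtain k where "(p ^^ k) v = 0"
      using is_forest_reaches_zero[OF f] by blast
    then show "\<exists>k. ((p(m := 0)) ^^ k) v = 0"
      using funpow_upd_childless[OF childless] v by auto
  qed
  moreover have "tree_root A p \<in> A - {m}" "(p(m := 0)) (tree_root A p) = 0"
    using tree_root[OF t] m(2) by auto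
  moreover have "r = tree_root A p" if "r \<in> A - {m}" "(p(m := 0)) r = 0" for r
    using that tree_root_eq[OF t, of r] by simp
  ultimately show ?thesis
    by (rule is_treeI)
qed

lemma top_minimal_delete_leaf:
  assumes top: "top_minimal p" and "p 0 = 0" and childless: "\<And>x. p x \<noteq> m"
  shows "top_minimal (p(m := 0))"
proof -
  have "strict_ancestor p u v" if "strict_ancestor (p(m := 0)) u v" for u v
  proof (cases "v = m")
    case True
    have "(p(m := 0)) m = 0" "(p(m := 0)) 0 = 0"
      using \<open>p 0 = 0\<close> by auto
    then show ?thesis
      using that True strict_ancestor_of_root by metis
  next
    case False
    then show ?thesis
      using that strict_ancestor_upd_childless[of p m, OF childless] by blast
  qed
  then show ?thesis
    using top unfolding top_minimal_def by blast
qed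

lemma is_forest_add_leaf:
  assumes f: "is_forest A q" and m: "m \<notin> A" "m \<noteq> 0" and r: "r \<in> A"
  shows "is_forest (insert m A) (q(m := r))"
proof (rule is_forestI)
  have childless: "\<And>x. q x \<noteq> m"
    using is_forest_parent_neq[OF f m] .
  have reach: "\<exists>k. ((q(m := r)) ^^ k) v = 0" if vA: "v \<in> A" for v
  proof -
    obtain k where "(q ^^ k) v = 0"
      using is_forest_reaches_zero[OF f vA] by blast
    moreover have "v \<noteq> m"
      using vA m(1) by blast
    ultimately have "((q(m := r)) ^^ k) v = 0"
      using funpow_upd_childless[of q m, OF childless] by simp
    then show ?thesis ..
  qed
  show "0 \<notin> insert m A"
    using is_forest_zero_notin[OF f] m(2) by simp
  fix v
  show "v \<notin> insert m A \<Longrightarrow> (q(m := r)) v = 0"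
    using is_forest_outside[OF f] by simp
  show "v \<in> insert m A \<Longrightarrow> (q(m := r)) v \<in> insert 0 (insert m A)"
    using is_forest_parent[OF f, of v] r by auto
  assume v: "v \<in> insert m A"
  show "\<exists>k. ((q(m := r)) ^^ k) v = 0"
  proof (cases "v = m")
    case True
    obtain k where "((q(m := r)) ^^ k) r = 0"
      using reach[OF r] by blast
    then have "((q(m := r)) ^^ Suc k) v = 0"
      using True by (simp add: funpow_swap1)
    then show ?thesis ..
  next
    case False
    then show ?thesis
      using reach v by simp
  qed
qed

lemma is_tree_add_leaf:
  assumes t: "is_tree A q" and m: "m \<notin> A" "m \<noteq> 0"
  shows "is_tree (insert m A) (q(m := tree_root A q))"
proof -
  define r where "r = tree_root A q"
  have r: "r \<in> A" "q r = 0" "r \<noteq> m"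
    using tree_root[OF t] m(1) unfolding r_def by auto
  have "r \<noteq> 0"
    using is_forest_nonzero[OF is_tree_forest[OF t] r(1)] .
  have "is_forest (insert m A) (q(m := r))"
    using is_forest_add_leaf[OF is_tree_forest[OF t] m r(1)] .
  moreover have "r \<in> insert m A" "(q(m := r)) r = 0"
    using r by auto
  moreover have "r' = r" if "r' \<in> insert m A" "(q(m := r)) r' = 0" for r'
  proof -
    have "r' \<noteq> m"
      using that(2) \<open>r \<noteq> 0\<close> by (cases "r' = m") simp_all
    then show ?thesis
      using that is_tree_root_unique[OF t _ _ r(1,2), of r'] by simp
  qed
  ultimately show ?thesis
    unfolding r_def by (rule is_treeI)
qed

lemma top_minimal_add_leaf:
  assumes t: "is_tree A q" and m: "m \<notin> A" "m \<noteq> 0" and top: "top_minimal q"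
  shows "top_minimal (q(m := tree_root A q))"
proof (rule top_minimalI)
  define r where "r = tree_root A q"
  have f: "is_forest A q" using is_tree_forest[OF t] .
  have r: "r \<in> A" "q r = 0" "r \<noteq> m"
    using tree_root[OF t] m(1) unfolding r_def by auto
  have childless: "\<And>x. q x \<noteq> m"
    using is_forest_parent_neq[OF f m] .
  have root: "(q(m := r)) r = 0" "(q(m := r)) 0 = 0"
    using r is_forest_zero[OF f] m(2) by auto
  fix a b c
  assume ab: "strict_ancestor (q(m := tree_root A q)) a b"
    and bc: "strict_ancestor (q(m := tree_root A q)) b c"
  have "c \<noteq> m"
  proof
    assume "c = m"
    then have "b = r \<or> strict_ancestor (q(m := r)) b r"
      using strict_ancestor_cases[OF bc[folded r_def]] by simp
    then have "b = r"
      using strict_ancestor_of_root[OF root] by blast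
    then show False
      using strict_ancestor_of_root[OF root] ab[folded r_def] by blast
  qed
  then have bc': "strict_ancestor q b c"
    using bc strict_ancestor_upd_childless[of q m, OF childless] by blast
  then have "b \<noteq> m"
    using strict_ancestor_in(1)[OF f] m(1) by blast
  then have "strict_ancestor q a b"
    using ab strict_ancestor_upd_childless[of q m, OF childless] by blast
  then show "a < b \<and> a < c"
    using top_minimalD[OF top _ bc'] by blast
qed

lemma bij_betw_delete_least_leaf:
  assumes "0 \<notin> A" "m \<in> A" "\<And>x. x \<in> A \<Longrightarrow> m \<le> x"
  shows "bij_betw (\<lambda>p. p(m := 0)) {p \<in> avoiding_trees A. p m \<noteq> 0} (avoiding_trees (A - {m}))"
proof (rule bij_betw_byWitness[where f' = "\<lambda>q. q(m := tree_root (A - {m}) q)"])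
  have m: "m \<notin> A - {m}" "m \<noteq> 0"
    using assms(1,2) by (blast, metis)
  have ins: "insert m (A - {m}) = A"
    using assms(2) by auto
  have leaf: "is_tree (A - {m}) (p(m := 0))" "top_minimal (p(m := 0))"
    "tree_root (A - {m}) (p(m := 0)) = p m"
    if "p \<in> avoiding_trees A" "p m \<noteq> 0" for p
  proof -
    have t: "is_tree A p" and top: "top_minimal p" and f: "is_forest A p"
      using that(1) is_tree_forest unfolding avoiding_trees_def by auto
    note nonroot = least_label_leaf_below_root[OF f top assms(2,3) that(2)]
    show t': "is_tree (A - {m}) (p(m := 0))"
      using is_tree_delete_leaf[OF t assms(2) that(2) nonroot(2)] .
    show "top_minimal (p(m := 0))"
      using top_minimal_delete_leaf[OF top is_forest_zero[OF f] nonroot(2)] .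
    have "p m \<in> A - {m}"
      using is_forest_parent[OF f assms(2)] that(2) nonroot(1) by auto
    then show "tree_root (A - {m}) (p(m := 0)) = p m"
      using tree_root_eq[OF t'] nonroot(1) by simp
  qed
  show "\<forall>p\<in>{p \<in> avoiding_trees A. p m \<noteq> 0}. (p(m := 0))(m := tree_root (A - {m}) (p(m := 0))) = p"
    using leaf(3) by auto
  show "\<forall>q\<in>avoiding_trees (A - {m}). (q(m := tree_root (A - {m}) q))(m := 0) = q"
    using is_forest_outside[OF is_tree_forest] unfolding avoiding_trees_def by fastforce
  show "(\<lambda>p. p(m := 0)) ` {p \<in> avoiding_trees A. p m \<noteq> 0} \<subseteq> avoiding_trees (A - {m})"
    using leaf(1,2) unfolding avoiding_trees_def by blast
  show "(\<lambda>q. q(m := tree_root (A - {m}) q)) ` avoiding_trees (A - {m})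
      \<subseteq> {p \<in> avoiding_trees A. p m \<noteq> 0}"
  proof (rule image_subsetI)
    fix q assume "q \<in> avoiding_trees (A - {m})"
    then have q: "is_tree (A - {m}) q" "top_minimal q"
      unfolding avoiding_trees_def by auto
    have "tree_root (A - {m}) q \<noteq> 0"
      using is_forest_nonzero[OF is_tree_forest[OF q(1)] tree_root(1)[OF q(1)]] .
    then show "q(m := tree_root (A - {m}) q) \<in> {p \<in> avoiding_trees A. p m \<noteq> 0}"
      using is_tree_add_leaf[OF q(1) m] top_minimal_add_leaf[OF q(1) m q(2)]
      unfolding ins avoiding_trees_def by simp
  qed
qed

lemma card_avoiding_trees_remove_least:
  assumes "finite A" "0 \<notin> A" "m \<in> A" "\<And>x. x \<in> A \<Longrightarrow> m \<le> x"
  shows "card (avoiding_trees A)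
    = card (avoiding_forests (A - {m})) + card (avoiding_trees (A - {m}))"
proof -
  have "card (avoiding_trees A)
      = card {p \<in> avoiding_trees A. p m = 0} + card {p \<in> avoiding_trees A. p m \<noteq> 0}"
    using card_Int_Diff[OF finite_avoiding_trees[OF assms(1)], of "{p. p m = 0}"]
    by (simp add: Int_def set_diff_eq)
  then show ?thesis
    using bij_betw_same_card[OF bij_betw_delete_least_root[OF assms(2-4)]]
      bij_betw_same_card[OF bij_betw_delete_least_leaf[OF assms(2-4)]] by simp
qed

section \<open>Splitting off the tree of a vertex\<close>

definition parents_on :: "nat set \<Rightarrow> (nat \<Rightarrow> nat) \<Rightarrow> nat \<Rightarrow> nat" where
  "parents_on C p = (\<lambda>v. if v \<in> C then p v else 0)"

definition glue :: "nat set \<Rightarrow> (nat \<Rightarrow> nat) \<Rightarrow> (nat \<Rightarrow> nat) \<Rightarrow> nat \<Rightarrow> nat" where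
  "glue C q q' = (\<lambda>v. if v \<in> C then q v else q' v)"

lemma funpow_parents_on:
  assumes "p 0 = 0" "\<And>x. x \<in> C \<Longrightarrow> p x \<in> insert 0 C" "v \<in> C"
  shows "(parents_on C p ^^ k) v = (p ^^ k) v"
proof -
  have "(p ^^ k) v = (parents_on C p ^^ k) v"
    by (rule funpow_eq_on_invariant[where S = "insert 0 C"])
      (use assms in \<open>fastforce simp: parents_on_def\<close>)+
  then show ?thesis by simp
qed

lemma strict_ancestor_parents_on:
  assumes "p 0 = 0" "\<And>x. x \<in> C \<Longrightarrow> p x \<in> insert 0 C"
  shows "strict_ancestor (parents_on C p) u v \<longleftrightarrow> v \<in> C \<and> strict_ancestor p u v"
proof (cases "v \<in> C")
  case True
  then show ?thesis
    unfolding strict_ancestor_def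
    using funpow_parents_on[where p = p and C = C, OF assms True] by simp
next
  case False
  have "parents_on C p v = 0" "parents_on C p 0 = 0"
    using False assms(1) by (simp_all add: parents_on_def)
  then show ?thesis
    using False strict_ancestor_of_root by metis
qed

lemma strict_ancestor_in_invariant:
  assumes "p 0 = 0" "\<And>x. x \<in> C \<Longrightarrow> p x \<in> insert 0 C" "v \<in> C" "strict_ancestor p u v"
  shows "u \<in> C"
proof -
  obtain k where "(p ^^ k) v = u" "u \<noteq> 0"
    using assms(4) unfolding strict_ancestor_def by blast
  then show ?thesis
    using funpow_in_invariant[of "insert 0 C" p v k] assms(1-3) by auto
qed

lemma is_forest_parents_on:
  assumes f: "is_forest B p" and C: "\<And>x. x \<in> C \<Longrightarrow> p x \<in> insert 0 C"
  shows "is_forest (B \<inter> C) (parents_on C p)"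
proof (rule is_forestI)
  show "0 \<notin> B \<inter> C" using is_forest_zero_notin[OF f] by simp
next
  fix v assume "v \<notin> B \<inter> C"
  then show "parents_on C p v = 0"
    using is_forest_outside[OF f] by (auto simp: parents_on_def)
next
  fix v assume "v \<in> B \<inter> C"
  then show "parents_on C p v \<in> insert 0 (B \<inter> C)"
    using is_forest_parent[OF f, of v] C[of v] by (auto simp: parents_on_def)
next
  fix v assume v: "v \<in> B \<inter> C"
  then obtain k where "(p ^^ k) v = 0"
    using is_forest_reaches_zero[OF f] by blast
  then show "\<exists>k. (parents_on C p ^^ k) v = 0"
    using funpow_parents_on[where p = p and C = C, OF is_forest_zero[OF f] C] v by auto
qed

lemma top_minimal_parents_on:
  assumes "p 0 = 0" "\<And>x. x \<in> C \<Longrightarrow> p x \<in> insert 0 C" "top_minimal p"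
  shows "top_minimal (parents_on C p)"
proof (rule top_minimalI)
  fix a b c
  assume "strict_ancestor (parents_on C p) a b" "strict_ancestor (parents_on C p) b c"
  then show "a < b \<and> a < c"
    using top_minimalD[OF assms(3)] strict_ancestor_parents_on[where p = p and C = C, OF assms(1,2)]
    by blast
qed

lemma top_minimal_parents_on_iff:
  assumes f: "is_forest (C \<union> D) p"
    and invC: "\<And>x. x \<in> C \<Longrightarrow> p x \<in> insert 0 C"
    and invD: "\<And>x. x \<in> D \<Longrightarrow> p x \<in> insert 0 D"
  shows "top_minimal p \<longleftrightarrow> top_minimal (parents_on C p) \<and> top_minimal (parents_on D p)"
proof -
  have p0: "p 0 = 0"
    using is_forest_zero[OF f] .
  note saC = strict_ancestor_parents_on[where p = p and C = C, OF p0 invC]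
  note saD = strict_ancestor_parents_on[where p = p and C = D, OF p0 invD]
  show ?thesis
  proof
    assume "top_minimal p"
    then show "top_minimal (parents_on C p) \<and> top_minimal (parents_on D p)"
      using top_minimal_parents_on[where p = p and C = C, OF p0 invC]
        top_minimal_parents_on[where p = p and C = D, OF p0 invD] by blast
  next
    assume "top_minimal (parents_on C p) \<and> top_minimal (parents_on D p)"
    then have topC: "top_minimal (parents_on C p)" and topD: "top_minimal (parents_on D p)"
      by auto
    show "top_minimal p"
    proof (rule top_minimalI)
      fix a b c assume ab: "strict_ancestor p a b" and bc: "strict_ancestor p b c"
      have "c \<in> C \<union> D"
        using strict_ancestor_in(2)[OF f bc] .
      then show "a < b \<and> a < c"
      proof
        assume c: "c \<in> C"
        have "b \<in> C"
          using p0 invC c bc by (rule strict_ancestor_in_invariant)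
        then show ?thesis
          using top_minimalD[OF topC] ab bc c saC by blast
      next
        assume c: "c \<in> D"
        have "b \<in> D"
          using p0 invD c bc by (rule strict_ancestor_in_invariant)
        then show ?thesis
          using top_minimalD[OF topD] ab bc c saD by blast
      qed
    qed
  qed
qed

lemma glue_agrees:
  assumes f1: "is_forest C q" and f2: "is_forest D q'" and "C \<inter> D = {}"
  shows "w \<in> insert 0 C \<Longrightarrow> glue C q q' w = q w" "w \<in> insert 0 D \<Longrightarrow> glue C q q' w = q' w"
  using assms is_forest_zero_notin[OF f1] is_forest_zero[OF f1] is_forest_zero[OF f2]
  by (auto simp: glue_def)

lemma glue_outside:
  assumes f1: "is_forest C q" and f2: "is_forest D q'" and "C \<inter> D = {}"
  shows "w \<notin> C \<Longrightarrow> glue C q q' w \<notin> C"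
  using assms is_forest_parent[OF f2, of w] is_forest_outside[OF f2, of w] is_forest_zero_notin[OF f1]
  by (cases "w \<in> D") (auto simp: glue_def)

lemma is_forest_glue:
  assumes f1: "is_forest C q" and f2: "is_forest D q'" and "C \<inter> D = {}"
  shows "is_forest (C \<union> D) (glue C q q')"
proof (rule is_forestI)
  note agree = glue_agrees[OF assms]
  show "0 \<notin> C \<union> D"
    using is_forest_zero_notin[OF f1] is_forest_zero_notin[OF f2] by simp
  fix v
  show "v \<notin> C \<union> D \<Longrightarrow> glue C q q' v = 0"
    using is_forest_outside[OF f2] by (simp add: glue_def)
  show "v \<in> C \<union> D \<Longrightarrow> glue C q q' v \<in> insert 0 (C \<union> D)"
    using agree is_forest_parent[OF f1, of v] is_forest_parent[OF f2, of v] by auto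
  assume "v \<in> C \<union> D"
  then show "\<exists>k. (glue C q q' ^^ k) v = 0"
  proof
    assume v: "v \<in> C"
    obtain k where "(q ^^ k) v = 0"
      using is_forest_reaches_zero[OF f1 v] by blast
    moreover have "(q ^^ k) v = (glue C q q' ^^ k) v"
      by (rule funpow_eq_on_invariant[where S = "insert 0 C"])
        (use agree(1) is_forest_parent[OF f1] is_forest_zero[OF f1] v in auto)
    ultimately show ?thesis by metis
  next
    assume v: "v \<in> D"
    obtain k where "(q' ^^ k) v = 0"
      using is_forest_reaches_zero[OF f2 v] by blast
    moreover have "(q' ^^ k) v = (glue C q q' ^^ k) v"
      by (rule funpow_eq_on_invariant[where S = "insert 0 D"])
        (use agree(2) is_forest_parent[OF f2] is_forest_zero[OF f2] v in auto)
    ultimately show ?thesis by metis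
  qed
qed

lemma glue_parents_on:
  assumes "is_forest B p"
  shows "glue C (parents_on C p) (parents_on (B - C) p) = p"
  using is_forest_outside[OF assms] by (auto simp: glue_def parents_on_def)

lemma parents_on_glue:
  assumes "\<And>v. v \<notin> C \<Longrightarrow> q v = 0" "\<And>v. v \<notin> D \<Longrightarrow> q' v = 0" "C \<inter> D = {}"
  shows "parents_on C (glue C q q') = q" "parents_on D (glue C q q') = q'"
  using assms by (auto simp: glue_def parents_on_def fun_eq_iff)

definition component :: "(nat \<Rightarrow> nat) \<Rightarrow> nat \<Rightarrow> nat set" where
  "component p b = {v. \<exists>i j. (p ^^ i) v = (p ^^ j) b \<and> (p ^^ j) b \<noteq> 0}"

lemma self_in_component:
  assumes "b \<noteq> 0"
  shows "b \<in> component p b"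
proof -
  have "(p ^^ 0) b = (p ^^ 0) b \<and> (p ^^ 0) b \<noteq> 0"
    using assms by simp
  then show ?thesis
    unfolding component_def by blast
qed

lemma component_invariant:
  assumes "v \<in> component p b"
  shows "p v \<in> insert 0 (component p b)"
proof -
  obtain i j where ij: "(p ^^ i) v = (p ^^ j) b" "(p ^^ j) b \<noteq> 0"
    using assms unfolding component_def by blast
  show ?thesis
  proof (cases i)
    case 0
    show ?thesis
    proof (cases "p v = 0")
      case False
      then have "(p ^^ 0) (p v) = (p ^^ Suc j) b \<and> (p ^^ Suc j) b \<noteq> 0"
        using ij(1) 0 by simp
      then show ?thesis
        unfolding component_def by blast
    qed simp
  next
    case (Suc i')
    then have "(p ^^ i') (p v) = (p ^^ j) b"
      using ij(1) by (simp add: funpow_swap1)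
    then show ?thesis
      using ij(2) unfolding component_def by blast
  qed
qed

lemma component_complement_invariant:
  assumes "v \<notin> component p b"
  shows "p v \<notin> component p b"
proof
  assume "p v \<in> component p b"
  then obtain i j where "(p ^^ i) (p v) = (p ^^ j) b" "(p ^^ j) b \<noteq> 0"
    unfolding component_def by blast
  then have "(p ^^ Suc i) v = (p ^^ j) b" "(p ^^ j) b \<noteq> 0"
    by (simp_all add: funpow_swap1)
  then show False
    using assms unfolding component_def by blast
qed

lemma component_subset:
  assumes f: "is_forest B p" and b: "b \<in> B"
  shows "component p b \<subseteq> B"
proof
  fix v assume "v \<in> component p b"
  then obtain i j where ij: "(p ^^ i) v = (p ^^ j) b" "(p ^^ j) b \<noteq> 0"
    unfolding component_def by blast
  have "(p ^^ j) b \<in> B"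
    using is_forest_funpow_in[OF f, of b j] b ij(2) by simp
  show "v \<in> B"
  proof (rule ccontr)
    assume "v \<notin> B"
    have "(p ^^ i) v \<in> insert 0 (- B)"
      by (rule funpow_in_invariant)
        (use \<open>v \<notin> B\<close> is_forest_outside[OF f] is_forest_zero[OF f] in auto)
    then show False
      using ij \<open>(p ^^ j) b \<in> B\<close> by simp
  qed
qed

lemma funpow_last_nonzero:
  assumes "(f ^^ k) x = 0" "x \<noteq> 0"
  shows "\<exists>j. (f ^^ j) x \<noteq> 0 \<and> f ((f ^^ j) x) = 0"
  using assms(1)
proof (induction k)
  case 0
  then show ?case using assms(2) by simp
next
  case (Suc k)
  show ?case
  proof (cases "(f ^^ k) x = 0")
    case True
    then show ?thesis using Suc.IH by blast
  next
    case False
    then show ?thesis using Suc.prems by (intro exI[of _ k]) simp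
  qed
qed

lemma funpow_last_nonzero_unique:
  assumes "f 0 = 0" "(f ^^ i) x \<noteq> 0" "f ((f ^^ i) x) = 0" "(f ^^ j) x \<noteq> 0" "f ((f ^^ j) x) = 0"
  shows "i = j"
proof -
  have zero_after: "(f ^^ l) x = 0" if "f ((f ^^ k) x) = 0" "k < l" for k l
  proof -
    have "l = (l - Suc k) + Suc k" using that(2) by simp
    then have "(f ^^ l) x = (f ^^ (l - Suc k)) ((f ^^ Suc k) x)"
      by (metis funpow_add o_apply)
    then show ?thesis
      using that(1) funpow_fixpoint[of f 0] assms(1) by simp
  qed
  show ?thesis
  proof (rule linorder_cases[of i j])
    assume "i < j"
    then show ?thesis
      using zero_after[OF assms(3)] assms(4) by simp
  next
    assume "j < i"
    then show ?thesis
      using zero_after[OF assms(5)] assms(2) by simp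
  qed
qed

lemma is_tree_reaches_root:
  assumes t: "is_tree C q" and v: "v \<in> C"
  shows "\<exists>i. (q ^^ i) v = tree_root C q"
proof -
  have f: "is_forest C q" using is_tree_forest[OF t] .
  obtain k where "(q ^^ k) v = 0"
    using is_forest_reaches_zero[OF f v] by blast
  then obtain i where i: "(q ^^ i) v \<noteq> 0" "q ((q ^^ i) v) = 0"
    using funpow_last_nonzero is_forest_nonzero[OF f v] by blast
  have "(q ^^ i) v \<in> C"
    using is_forest_funpow_in[OF f, of v i] v i(1) by simp
  then have "tree_root C q = (q ^^ i) v"
    using tree_root_eq[OF t _ i(2)] by simp
  then show ?thesis by auto
qed

lemma component_root_on_path:
  assumes "p 0 = 0" "r \<in> component p b" "p r = 0"
  shows "\<exists>j. r = (p ^^ j) b \<and> (p ^^ j) b \<noteq> 0"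
proof -
  obtain i j where ij: "(p ^^ i) r = (p ^^ j) b" "(p ^^ j) b \<noteq> 0"
    using assms(2) unfolding component_def by blast
  have "i = 0"
  proof (rule ccontr)
    assume "i \<noteq> 0"
    then obtain i' where "i = Suc i'" by (cases i) auto
    then have "(p ^^ i) r = 0"
      using assms(1,3) funpow_fixpoint[of p 0] by (simp add: funpow_swap1)
    then show False using ij by simp
  qed
  then show ?thesis
    using ij by auto
qed

lemma is_tree_component:
  assumes f: "is_forest B p" and b: "b \<in> B"
  shows "is_tree (component p b) (parents_on (component p b) p)"
proof -
  let ?C = "component p b"
  have "is_forest (B \<inter> ?C) (parents_on ?C p)"
    using f component_invariant by (rule is_forest_parents_on)
  then have fC: "is_forest ?C (parents_on ?C p)"
    using component_subset[OF f b] by (simp add: Int_absorb1)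
  have p0: "p 0 = 0" using is_forest_zero[OF f] .
  have b0: "b \<noteq> 0" using is_forest_nonzero[OF f b] .
  obtain k where "(p ^^ k) b = 0"
    using is_forest_reaches_zero[OF f b] by blast
  then obtain j where j: "(p ^^ j) b \<noteq> 0" "p ((p ^^ j) b) = 0"
    using funpow_last_nonzero b0 by blast
  have "(p ^^ 0) ((p ^^ j) b) = (p ^^ j) b \<and> (p ^^ j) b \<noteq> 0"
    using j(1) by simp
  then have rC: "(p ^^ j) b \<in> ?C"
    unfolding component_def by blast
  have "r = (p ^^ j) b" if r: "r \<in> ?C" "parents_on ?C p r = 0" for r
  proof -
    have pr: "p r = 0"
      using r unfolding parents_on_def by simp
    then obtain j' where "r = (p ^^ j') b" "(p ^^ j') b \<noteq> 0"
      using component_root_on_path[OF p0 r(1)] by blast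
    moreover have "j' = j"
      using funpow_last_nonzero_unique[OF p0 _ _ j] pr calculation by simp
    ultimately show ?thesis by simp
  qed
  moreover have "parents_on ?C p ((p ^^ j) b) = 0"
    using j(2) by (simp add: parents_on_def)
  ultimately show ?thesis
    using is_treeI[OF fC rC] by blast
qed

lemma component_glue:
  assumes t: "is_tree C q" and f2: "is_forest D q'" and CD: "C \<inter> D = {}" and b: "b \<in> C"
  shows "component (glue C q q') b = C"
proof
  let ?g = "glue C q q'"
  have f1: "is_forest C q" using is_tree_forest[OF t] .
  note agree = glue_agrees[OF f1 f2 CD]
  have funpow_glue: "(?g ^^ k) v = (q ^^ k) v" if "v \<in> C" for v k
    by (rule funpow_eq_on_invariant[where S = "insert 0 C"])
      (use agree(1) is_forest_parent[OF f1] is_forest_zero[OF f1] that in auto)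
  show "component ?g b \<subseteq> C"
  proof
    fix v assume "v \<in> component ?g b"
    then obtain i j where ij: "(?g ^^ i) v = (?g ^^ j) b" "(?g ^^ j) b \<noteq> 0"
      unfolding component_def by blast
    have "(?g ^^ j) b \<in> C"
      using funpow_glue[OF b] is_forest_funpow_in[OF f1, of b j] b ij(2) by simp
    show "v \<in> C"
    proof (rule ccontr)
      assume "v \<notin> C"
      have "?g w \<in> - C" if "w \<in> - C" for w
        using glue_outside[OF f1 f2 CD] that by simp
      then have "(?g ^^ i) v \<in> - C"
        using funpow_in_invariant[of "- C" ?g v i] \<open>v \<notin> C\<close> by blast
      then show False
        using ij(1) \<open>(?g ^^ j) b \<in> C\<close> by simp
    qed
  qed
  show "C \<subseteq> component ?g b"
  proof
    fix v assume v: "v \<in> C"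
    obtain i j where "(q ^^ i) v = tree_root C q" "(q ^^ j) b = tree_root C q"
      using is_tree_reaches_root[OF t] v b by metis
    moreover have "tree_root C q \<noteq> 0"
      using is_forest_nonzero[OF f1 tree_root(1)[OF t]] .
    ultimately have "(?g ^^ i) v = (?g ^^ j) b \<and> (?g ^^ j) b \<noteq> 0"
      using funpow_glue[OF v] funpow_glue[OF b] by simp
    then show "v \<in> component ?g b"
      unfolding component_def by blast
  qed
qed

lemma avoiding_forest_split:
  assumes p: "p \<in> avoiding_forests B" and b: "b \<in> B"
  defines "C \<equiv> component p b"
  shows "b \<in> C" "C \<subseteq> B" "parents_on C p \<in> avoiding_trees C"
    "parents_on (B - C) p \<in> avoiding_forests (B - C)"
proof -
  have f: "is_forest B p" and top: "top_minimal p"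
    using p unfolding avoiding_forests_def by auto
  show "b \<in> C"
    unfolding C_def using self_in_component is_forest_nonzero[OF f b] by blast
  show sub: "C \<subseteq> B"
    unfolding C_def using component_subset[OF f b] .
  have invC: "\<And>x. x \<in> C \<Longrightarrow> p x \<in> insert 0 C"
    unfolding C_def by (rule component_invariant)
  have invD: "\<And>x. x \<in> B - C \<Longrightarrow> p x \<in> insert 0 (B - C)"
    using is_forest_parent[OF f] component_complement_invariant unfolding C_def by blast
  have "C \<union> (B - C) = B"
    using sub by blast
  then have "top_minimal (parents_on C p) \<and> top_minimal (parents_on (B - C) p)"
    using top_minimal_parents_on_iff[of C "B - C" p] f invC invD top by simp
  moreover have "is_forest (B - C) (parents_on (B - C) p)"
    using is_forest_parents_on[OF f invD] by (simp add: Int_absorb1)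
  ultimately show "parents_on C p \<in> avoiding_trees C"
      "parents_on (B - C) p \<in> avoiding_forests (B - C)"
    using is_tree_component[OF f b] unfolding avoiding_trees_def avoiding_forests_def C_def by auto
qed

lemma avoiding_forest_glue:
  assumes C: "C \<subseteq> B" "b \<in> C"
    and q: "q \<in> avoiding_trees C" and q': "q' \<in> avoiding_forests (B - C)"
  shows "glue C q q' \<in> avoiding_forests B" "component (glue C q q') b = C"
    "parents_on C (glue C q q') = q" "parents_on (B - C) (glue C q q') = q'"
proof -
  have t1: "is_tree C q" and f2: "is_forest (B - C) q'"
    and top: "top_minimal q" "top_minimal q'"
    using q q' unfolding avoiding_trees_def avoiding_forests_def by auto
  have f1: "is_forest C q" using is_tree_forest[OF t1] .
  have CD: "C \<inter> (B - C) = {}" by blast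
  note agree = glue_agrees[OF f1 f2 CD]
  have "C \<union> (B - C) = B" using C(1) by blast
  then have fg: "is_forest B (glue C q q')"
    using is_forest_glue[OF f1 f2 CD] by simp
  show parts: "parents_on C (glue C q q') = q" "parents_on (B - C) (glue C q q') = q'"
    using parents_on_glue[where q = q and q' = q',
        OF is_forest_outside[OF f1] is_forest_outside[OF f2] CD]
    by blast+
  have invC: "\<And>x. x \<in> C \<Longrightarrow> glue C q q' x \<in> insert 0 C"
    using agree(1) is_forest_parent[OF f1] by simp
  have invD: "\<And>x. x \<in> B - C \<Longrightarrow> glue C q q' x \<in> insert 0 (B - C)"
    using agree(2) is_forest_parent[OF f2] by simp
  have "is_forest (C \<union> (B - C)) (glue C q q')"
    using \<open>C \<union> (B - C) = B\<close> fg by simp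
  then have "top_minimal (glue C q q')"
    using top_minimal_parents_on_iff[OF _ invC invD] parts top by simp
  then show "glue C q q' \<in> avoiding_forests B"
    using fg unfolding avoiding_forests_def by simp
  show "component (glue C q q') b = C"
    using component_glue[OF t1 f2 CD C(2)] .
qed

lemma bij_betw_component_split:
  assumes "0 \<notin> B" "b \<in> B"
  shows "bij_betw
    (\<lambda>p. (component p b - {b}, parents_on (component p b) p, parents_on (B - component p b) p))
    (avoiding_forests B)
    (SIGMA S:Pow (B - {b}). avoiding_trees (insert b S) \<times> avoiding_forests (B - insert b S))"
    (is "bij_betw ?split _ ?parts")
proof (rule bij_betw_byWitness[where f' = "\<lambda>(S, q, q'). glue (insert b S) q q'"])
  have ins: "insert b (component p b - {b}) = component p b" if "p \<in> avoiding_forests B" for p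
    using avoiding_forest_split(1)[OF that assms(2)] by blast
  have glue: "glue (insert b S) q q' \<in> avoiding_forests B
      \<and> ?split (glue (insert b S) q q') = (S, q, q')"
    if "(S, q, q') \<in> ?parts" for S q q'
  proof -
    have "S \<subseteq> B - {b}" "q \<in> avoiding_trees (insert b S)" "q' \<in> avoiding_forests (B - insert b S)"
      using that by auto
    moreover have "insert b S \<subseteq> B" "b \<in> insert b S" "b \<notin> S"
      using assms(2) calculation(1) by auto
    ultimately show ?thesis
      using avoiding_forest_glue[of "insert b S" B b q q'] by auto
  qed
  show "\<forall>p\<in>avoiding_forests B. (\<lambda>(S, q, q'). glue (insert b S) q q') (?split p) = p"
    using ins glue_parents_on unfolding avoiding_forests_def by auto
  show "?split ` avoiding_forests B \<subseteq> ?parts"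
    using avoiding_forest_split[OF _ assms(2)] ins by auto
  show "\<forall>x\<in>?parts. ?split ((\<lambda>(S, q, q'). glue (insert b S) q q') x) = x"
    using glue by auto
  show "(\<lambda>(S, q, q'). glue (insert b S) q q') ` ?parts \<subseteq> avoiding_forests B"
    using glue by auto
qed

lemma card_avoiding_forests_split:
  assumes "finite B" "0 \<notin> B" "b \<in> B"
  shows "card (avoiding_forests B) = (\<Sum>S\<in>Pow (B - {b}).
    card (avoiding_trees (insert b S)) * card (avoiding_forests (B - insert b S)))"
proof -
  have "card (avoiding_forests B) = card (SIGMA S:Pow (B - {b}).
      avoiding_trees (insert b S) \<times> avoiding_forests (B - insert b S))"
    using bij_betw_same_card[OF bij_betw_component_split[OF assms(2,3)]] .
  also have "\<dots> = (\<Sum>S\<in>Pow (B - {b}).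
      card (avoiding_trees (insert b S) \<times> avoiding_forests (B - insert b S)))"
    using assms(1)
    by (intro card_SigmaI) (auto intro!: finite_avoiding_trees finite_avoiding_forests
        dest: finite_subset)
  finally show ?thesis
    by (simp add: card_cartesian_product)
qed

section \<open>Counting\<close>

definition forest_count :: "nat \<Rightarrow> nat" where
  "forest_count n = card (avoiding_forests {1..n})"

lemma sum_Pow_card:
  assumes "finite D"
  shows "(\<Sum>S\<in>Pow D. g (card S)) = (\<Sum>k=0..card D. (card D choose k) * g k)"
proof -
  have "(\<Sum>S\<in>Pow D. g (card S)) = (\<Sum>k=0..card D. \<Sum>S\<in>{S \<in> Pow D. card S = k}. g (card S))"
  proof (rule sum.group[symmetric])
    show "card ` Pow D \<subseteq> {0..card D}"
      using assms card_mono by fastforce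
  qed (use assms in simp_all)
  also have "\<dots> = (\<Sum>k=0..card D. (card D choose k) * g k)"
  proof (rule sum.cong[OF refl])
    fix k
    have "{S \<in> Pow D. card S = k} = {S. S \<subseteq> D \<and> card S = k}" by auto
    then show "(\<Sum>S\<in>{S \<in> Pow D. card S = k}. g (card S)) = (card D choose k) * g k"
      using n_subsets[OF assms, of k] by simp
  qed
  finally show ?thesis .
qed

lemma card_avoiding_trees_Suc:
  assumes A: "finite A" "0 \<notin> A" "card A = Suc n"
    and IH: "\<And>B. finite B \<Longrightarrow> 0 \<notin> B \<Longrightarrow> card B = n \<Longrightarrow>
      card (avoiding_trees B) = t_count n \<and> card (avoiding_forests B) = forest_count n"
  shows "card (avoiding_trees A) = forest_count n + t_count n"
proof -
  have "A \<noteq> {}" using A(3) by auto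
  then have "Min A \<in> A" "\<And>x. x \<in> A \<Longrightarrow> Min A \<le> x"
    using A(1) by simp_all
  moreover have "card (A - {Min A}) = n"
    using A(3) calculation(1) by simp
  ultimately show ?thesis
    using card_avoiding_trees_remove_least[OF A(1,2)] IH[of "A - {Min A}"] A(1,2) by simp
qed

lemma card_avoiding_forests_Suc:
  assumes A: "finite A" "0 \<notin> A" "card A = Suc n"
    and trees: "\<And>B. finite B \<Longrightarrow> 0 \<notin> B \<Longrightarrow> card B \<le> Suc n \<Longrightarrow>
      card (avoiding_trees B) = t_count (card B)"
    and forests: "\<And>B. finite B \<Longrightarrow> 0 \<notin> B \<Longrightarrow> card B \<le> n \<Longrightarrow>
      card (avoiding_forests B) = forest_count (card B)"
  shows "card (avoiding_forests A)
    = (\<Sum>k=0..n. (n choose k) * (t_count (Suc k) * forest_count (n - k)))"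
proof -
  have "A \<noteq> {}"
    using A(3) by auto
  then obtain b where b: "b \<in> A"
    by blast
  let ?D = "A - {b}"
  have D: "finite ?D" "card ?D = n"
    using A b by simp_all
  have summand: "card (avoiding_trees (insert b S)) * card (avoiding_forests (A - insert b S))
      = t_count (Suc (card S)) * forest_count (n - card S)" if "S \<in> Pow ?D" for S
  proof -
    have S: "finite S" "S \<subseteq> ?D" "b \<notin> S"
      using that finite_subset[OF _ D(1)] by auto
    have "insert b S \<subseteq> A" "?D - S \<subseteq> A"
      using S(2) b by auto
    then have zero: "0 \<notin> insert b S" "0 \<notin> ?D - S"
      using A(2) by blast+
    have "card (insert b S) = Suc (card S)" "card (?D - S) = n - card S"
      using S card_Diff_subset[OF S(1,2)] D(2) by simp_all
    moreover have "card S \<le> n"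
      using card_mono[OF D(1) S(2)] D(2) by simp
    ultimately have "card (avoiding_trees (insert b S)) = t_count (Suc (card S))"
      "card (avoiding_forests (?D - S)) = forest_count (n - card S)"
      using trees[OF _ zero(1)] forests[OF _ zero(2)] S(1) D(1) by simp_all
    moreover have "A - insert b S = ?D - S"
      by auto
    ultimately show ?thesis
      by simp
  qed
  have "card (avoiding_forests A)
      = (\<Sum>S\<in>Pow ?D. card (avoiding_trees (insert b S)) * card (avoiding_forests (A - insert b S)))"
    using card_avoiding_forests_split[OF A(1,2) b] .
  also have "\<dots> = (\<Sum>S\<in>Pow ?D. t_count (Suc (card S)) * forest_count (n - card S))"
    by (rule sum.cong[OF refl]) (rule summand)
  also have "\<dots> = (\<Sum>k=0..n. (n choose k) * (t_count (Suc k) * forest_count (n - k)))"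
    using sum_Pow_card[OF D(1), of "\<lambda>k. t_count (Suc k) * forest_count (n - k)"] D(2) by simp
  finally show ?thesis .
qed

lemma card_avoiding_trees_forests:
  assumes "finite A" "0 \<notin> A"
  shows "card (avoiding_trees A) = t_count (card A)
    \<and> card (avoiding_forests A) = forest_count (card A)"
  using assms
proof (induction "card A" arbitrary: A rule: less_induct)
  case less
  show ?case
  proof (cases "card A")
    case 0
    then have "A = {1..0}"
      using less.prems by simp
    then show ?thesis
      unfolding t_count_eq_card_avoiding_trees forest_count_def by simp
  next
    case (Suc n)
    have interval: "finite {1..Suc n}" "0 \<notin> {1..Suc n}" "card {1..Suc n} = Suc n"
      by simp_all
    have IH: "card (avoiding_trees B) = t_count (card B) \<and>
        card (avoiding_forests B) = forest_count (card B)"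
      if "finite B" "0 \<notin> B" "card B \<le> n" for B
      using less.hyps[of B] that Suc by simp
    have trees_Suc: "card (avoiding_trees B) = t_count (Suc n)"
      if "finite B" "0 \<notin> B" "card B = Suc n" for B
    proof -
      have "card (avoiding_trees B') = forest_count n + t_count n"
        if "finite B'" "0 \<notin> B'" "card B' = Suc n" for B'
        by (rule card_avoiding_trees_Suc[OF that]) (use IH in simp)
      from this[OF that] this[OF interval] show ?thesis
        unfolding t_count_eq_card_avoiding_trees[of "Suc n"] by simp
    qed
    have trees: "card (avoiding_trees B) = t_count (card B)"
      if "finite B" "0 \<notin> B" "card B \<le> Suc n" for B
      using that trees_Suc[OF that(1,2)] IH[OF that(1,2)] by (cases "card B = Suc n") simp_all
    have "card (avoiding_forests B)
        = (\<Sum>k=0..n. (n choose k) * (t_count (Suc k) * forest_count (n - k)))"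
      if "finite B" "0 \<notin> B" "card B = Suc n" for B
      by (rule card_avoiding_forests_Suc[OF that trees]) (use IH in simp_all)
    from this[OF less.prems Suc] this[OF interval]
    have "card (avoiding_forests A) = forest_count (Suc n)"
      unfolding forest_count_def[of "Suc n"] by simp
    then show ?thesis
      using trees_Suc less.prems Suc by simp
  qed
qed

lemma t_count_Suc: "t_count (Suc n) = forest_count n + t_count n"
proof -
  have "card (avoiding_trees {1..Suc n}) = forest_count n + t_count n"
    by (rule card_avoiding_trees_Suc) (use card_avoiding_trees_forests in simp_all)
  then show ?thesis
    unfolding t_count_eq_card_avoiding_trees[of "Suc n"] .
qed

lemma forest_count_Suc:
  "forest_count (Suc n) = (\<Sum>k=0..n. (n choose k) * (t_count (Suc k) * forest_count (n - k)))"
  unfolding forest_count_def[of "Suc n"]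
  by (rule card_avoiding_forests_Suc) (use card_avoiding_trees_forests in simp_all)

lemma t_count_0: "t_count 0 = 0"
proof -
  have "\<not> is_tree {} p" for p
    unfolding is_tree_def by blast
  then have "avoiding_trees {1..0} = {}"
    unfolding avoiding_trees_def by simp
  then show ?thesis
    unfolding t_count_eq_card_avoiding_trees by simp
qed

lemma forest_count_0: "forest_count 0 = 1"
proof -
  have "\<not> strict_ancestor (\<lambda>_. 0) u v" for u v
    using strict_ancestor_of_root[of "\<lambda>_. 0"] by simp
  then have "top_minimal (\<lambda>_. 0)"
    unfolding top_minimal_def by blast
  moreover have "is_forest {} (\<lambda>_. 0)"
    unfolding is_forest_def by simp
  moreover have "p = (\<lambda>_. 0)" if "is_forest {} p" for p
    using is_forest_outside[OF that] by (simp add: fun_eq_iff)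
  ultimately have "avoiding_forests {} = {\<lambda>_. 0}"
    unfolding avoiding_forests_def by blast
  then show ?thesis
    unfolding forest_count_def by simp
qed

section \<open>Exponential generating functions\<close>

definition egf :: "(nat \<Rightarrow> nat) \<Rightarrow> real fps" where
  "egf a = Abs_fps (\<lambda>n. of_nat (a n) / fact n)"

lemma fps_deriv_egf: "fps_deriv (egf a) = egf (\<lambda>n. a (Suc n))"
proof (rule fps_ext)
  fix n
  have "fact (Suc n) = (of_nat (Suc n) * fact n :: real)"
    by simp
  then show "fps_nth (fps_deriv (egf a)) n = fps_nth (egf (\<lambda>n. a (Suc n))) n"
    by (simp add: egf_def)
qed

lemma egf_add: "egf (\<lambda>n. a n + b n) = egf a + egf b"
  by (simp add: egf_def fps_eq_iff add_divide_distrib)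

lemma egf_mult: "egf (\<lambda>n. \<Sum>k=0..n. (n choose k) * (a k * b (n - k))) = egf a * egf b"
proof (rule fps_ext)
  fix n
  have "(of_nat (\<Sum>k=0..n. (n choose k) * (a k * b (n - k))) / fact n :: real)
      = (\<Sum>k=0..n. of_nat (a k) / fact k * (of_nat (b (n - k)) / fact (n - k)))"
    unfolding of_nat_sum sum_divide_distrib
  proof (rule sum.cong[OF refl])
    fix k assume "k \<in> {0..n}"
    then have "(of_nat (n choose k) :: real) = fact n / (fact k * fact (n - k))"
      by (simp add: binomial_fact)
    then show "of_nat ((n choose k) * (a k * b (n - k))) / fact n
        = of_nat (a k) / fact k * (of_nat (b (n - k)) / (fact (n - k) :: real))"
      by (simp add: field_simps)
  qed
  then show "fps_nth (egf (\<lambda>n. \<Sum>k=0..n. (n choose k) * (a k * b (n - k)))) n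
      = fps_nth (egf a * egf b) n"
    by (simp add: egf_def fps_mult_nth)
qed

lemma fps_linear_ode_unique:
  fixes G H D :: "'a :: field_char_0 fps"
  assumes "fps_deriv G = D * G" "fps_deriv H = D * H" "fps_nth G 0 = fps_nth H 0"
  shows "G = H"
proof -
  have "\<forall>m\<le>n. fps_nth G m = fps_nth H m" for n
  proof (induction n)
    case 0
    then show ?case using assms(3) by simp
  next
    case (Suc n)
    have "of_nat (n + 1) * fps_nth G (n + 1) = fps_nth (fps_deriv G) n"
      by simp
    also have "\<dots> = (\<Sum>i=0..n. fps_nth D i * fps_nth G (n - i))"
      by (simp only: assms(1) fps_mult_nth)
    also have "\<dots> = (\<Sum>i=0..n. fps_nth D i * fps_nth H (n - i))"
      by (rule sum.cong[OF refl]) (use Suc in simp)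
    also have "\<dots> = fps_nth (fps_deriv H) n"
      by (simp only: assms(2) fps_mult_nth)
    also have "\<dots> = of_nat (n + 1) * fps_nth H (n + 1)"
      by simp
    finally have "fps_nth G (Suc n) = fps_nth H (Suc n)"
      using of_nat_neq_0[of n, where 'a = 'a] by simp
    then show ?case
      using Suc by (auto simp: le_Suc_eq)
  qed
  then show ?thesis
    by (intro fps_ext) blast
qed

theorem proposition5p12:
  shows "fps_deriv T_egf = T_egf + (fps_exp (1::real) oo T_egf) \<and> fps_nth T_egf 0 = 0"
proof -
  have T: "T_egf = egf t_count"
    unfolding T_egf_def egf_def ..
  have T0: "fps_nth T_egf 0 = 0"
    using t_count_0 by (simp add: T egf_def)
  have dT: "fps_deriv T_egf = egf forest_count + T_egf"
    unfolding T fps_deriv_egf t_count_Suc egf_add ..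
  have "fps_deriv (egf forest_count) = fps_deriv T_egf * egf forest_count"
    using egf_mult[of "\<lambda>k. t_count (Suc k)" forest_count]
    unfolding T fps_deriv_egf forest_count_Suc by simp
  moreover have "fps_deriv (fps_exp 1 oo T_egf) = fps_deriv T_egf * (fps_exp 1 oo T_egf)"
    using fps_compose_deriv[OF T0, of "fps_exp 1"] by (simp add: mult.commute)
  ultimately have "egf forest_count = fps_exp 1 oo T_egf"
    by (rule fps_linear_ode_unique) (simp add: egf_def forest_count_0)
  then show ?thesis
    using dT T0 by (simp add: add.commute)
qed

end
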